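(* Let $0\le a<b$, let $\alpha\in(0,1)$, and let $k:[a,b]\to\mathbb{R}$ be a continuous nonnegative map, differentiable on $[a,b]$, with $k(t)\neq 0$ and $k'(t)\neq 0$. Let $f:[a,b]\to\mathbb{R}$ be a continuous function such that $I^{\alpha}(f)$ exists. Then for all $t\in(a,b)$, $$D^{\alpha}\left[I^{\alpha}(f)\right](t)=f(t).$$
   Context: The $\alpha$-generalized fractional integral of $f$ is $I^{\alpha}(f)(t)=\int_a^t \frac{k'(x)f(x)}{(k(x))^{1-\alpha}}\,dx$ (as a possibly improper Riemann integral). For a function $F$ defined near $t\in(a,b)$ the generalized fractional derivative of order $\alpha$ is $$D^{\alpha}(F)(t):=\lim_{\varepsilon\to 0}\frac{F\left(t-k(t)+k(t)\,e^{\varepsilon\frac{(k(t))^{-\alpha}}{k'(t)}}\right)-F(t)}{\varepsilon}.$$ *)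

theory Defs
  imports "HOL-Analysis.Analysis"
begin

definition gen_frac_integrand ::
  "(real \<Rightarrow> real) \<Rightarrow> (real \<Rightarrow> real) \<Rightarrow> real \<Rightarrow> (real \<Rightarrow> real) \<Rightarrow> real \<Rightarrow> real" where
  "gen_frac_integrand k k' \<alpha> f x = k' x * f x / (k x) powr (1 - \<alpha>)"

text \<open>The alpha-generalized fractional integral I^alpha(f)(t) = int_a^t k' f / k^(1-alpha),
  taken as a (Henstock-Kurzweil) integral over [a,t]; this subsumes improper Riemann integrals.\<close>
definition gen_frac_integral ::
  "(real \<Rightarrow> real) \<Rightarrow> (real \<Rightarrow> real) \<Rightarrow> real \<Rightarrow> real \<Rightarrow> (real \<Rightarrow> real) \<Rightarrow> real \<Rightarrow> real" where
  "gen_frac_integral k k' a \<alpha> f t = integral {a..t} (gen_frac_integrand k k' \<alpha> f)"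

definition gen_frac_integral_exists ::
  "(real \<Rightarrow> real) \<Rightarrow> (real \<Rightarrow> real) \<Rightarrow> real \<Rightarrow> real \<Rightarrow> real \<Rightarrow> (real \<Rightarrow> real) \<Rightarrow> bool" where
  "gen_frac_integral_exists k k' a b \<alpha> f \<longleftrightarrow>
     (\<forall>t\<in>{a..b}. gen_frac_integrand k k' \<alpha> f integrable_on {a..t})"

definition has_gen_frac_deriv ::
  "(real \<Rightarrow> real) \<Rightarrow> (real \<Rightarrow> real) \<Rightarrow> real \<Rightarrow> (real \<Rightarrow> real) \<Rightarrow> real \<Rightarrow> real \<Rightarrow> bool" where
  "has_gen_frac_deriv k k' \<alpha> F t L \<longleftrightarrow>
     ((\<lambda>\<epsilon>. (F (t - k t + k t * exp (\<epsilon> * (k t) powr (- \<alpha>) / k' t)) - F t) / \<epsilon>)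
        \<longlongrightarrow> L) (at 0)"

end

theory Submission
  imports Defs
begin

text \<open>Since \<open>k\<close> is positive and \<open>k'\<close> never vanishes, Darboux's theorem forces \<open>k'\<close> to have
  constant sign, so the weight \<open>w = k' / k\<^sup>1\<^sup>-\<^sup>\<alpha>\<close> of the integrand \<open>w f\<close> of \<open>I\<^sup>\<alpha>(f)\<close> has
  constant sign and is the derivative of \<open>h = k\<^sup>\<alpha> / \<alpha>\<close>. Hence on an interval where \<open>f\<close> stays
  within \<open>\<eta>\<close> of \<open>f(t)\<close>, the integral of \<open>w f\<close> differs from \<open>f(t) (h(v) - h(u))\<close> by at most
  \<open>\<eta> |h(v) - h(u)|\<close>. This gives \<open>I\<^sup>\<alpha>(f)'(t) = w(t) f(t)\<close> without any continuity of \<open>k'\<close>.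
  Finally \<open>D\<^sup>\<alpha>\<close> of a differentiable function is its derivative times
  \<open>k(t)\<^sup>1\<^sup>-\<^sup>\<alpha> / k'(t)\<close>, by the chain rule, which cancels \<open>w(t)\<close>.\<close>

lemma DERIV_sign_change_imp_zero:
  fixes k k' :: "real \<Rightarrow> real"
  assumes "x < y"
    and der: "\<And>z. z \<in> {x..y} \<Longrightarrow> DERIV k z :> k' z"
    and "0 < k' x" and "k' y < 0"
  shows "\<exists>z\<in>{x<..<y}. k' z = 0"
proof -
  have "continuous_on {x..y} k"
    using der by (meson DERIV_isCont continuous_at_imp_continuous_on)
  then obtain z where z: "z \<in> {x..y}" and max: "\<And>v. v \<in> {x..y} \<Longrightarrow> k v \<le> k z"
    using continuous_attains_sup[of "{x..y}" k] \<open>x < y\<close> by auto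
  have "z \<noteq> x"
  proof
    assume "z = x"
    obtain d where "d > 0" and inc: "\<And>e. 0 < e \<Longrightarrow> e < d \<Longrightarrow> k x < k (x + e)"
      using DERIV_pos_inc_right[OF der[of x] \<open>0 < k' x\<close>] \<open>x < y\<close> by auto
    define e where "e = min (d / 2) (y - x)"
    have "0 < e" "e < d" "x + e \<in> {x..y}"
      using \<open>d > 0\<close> \<open>x < y\<close> by (auto simp: e_def)
    then show False
      using inc[of e] max[of "x + e"] \<open>z = x\<close> by fastforce
  qed
  moreover have "z \<noteq> y"
  proof
    assume "z = y"
    obtain d where "d > 0" and dec: "\<And>e. 0 < e \<Longrightarrow> e < d \<Longrightarrow> k y < k (y - e)"
      using DERIV_neg_dec_left[OF der[of y] \<open>k' y < 0\<close>] \<open>x < y\<close> by auto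
    define e where "e = min (d / 2) (y - x)"
    have "0 < e" "e < d" "y - e \<in> {x..y}"
      using \<open>d > 0\<close> \<open>x < y\<close> by (auto simp: e_def)
    then show False
      using dec[of e] max[of "y - e"] \<open>z = y\<close> by fastforce
  qed
  ultimately have "z \<in> {x<..<y}"
    using z by auto
  moreover have "k' z = 0"
  proof (rule DERIV_local_max[OF der[of z]])
    show "z \<in> {x..y}" "0 < min (z - x) (y - z)"
      using \<open>z \<in> {x<..<y}\<close> by auto
    show "\<forall>v. \<bar>z - v\<bar> < min (z - x) (y - z) \<longrightarrow> k v \<le> k z"
      using max by (auto simp: abs_if)
  qed
  ultimately show ?thesis
    by blast
qed

lemma DERIV_nonzero_imp_constant_sign:
  fixes k k' :: "real \<Rightarrow> real"
  assumes der: "\<And>z. z \<in> {c<..<d} \<Longrightarrow> DERIV k z :> k' z"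
    and nz: "\<And>z. z \<in> {c<..<d} \<Longrightarrow> k' z \<noteq> 0"
  shows "(\<forall>z\<in>{c<..<d}. 0 < k' z) \<or> (\<forall>z\<in>{c<..<d}. k' z < 0)"
proof (rule ccontr)
  assume "\<not> ?thesis"
  then obtain x y where x: "x \<in> {c<..<d}" "0 < k' x" and y: "y \<in> {c<..<d}" "k' y < 0"
    using nz by (metis linorder_neqE_linordered_idom)
  then consider "x < y" | "y < x"
    by (metis less_asym linorder_neqE_linordered_idom)
  then obtain z where "z \<in> {c<..<d}" "k' z = 0"
  proof cases
    case 1
    have "\<And>z. z \<in> {x..y} \<Longrightarrow> DERIV k z :> k' z"
      using der x y by auto
    then obtain z where "z \<in> {x<..<y}" "k' z = 0"
      using DERIV_sign_change_imp_zero[of x y k k'] 1 x y by blast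
    then show ?thesis
      using that[of z] x y by auto
  next
    case 2
    have "\<And>z. z \<in> {y..x} \<Longrightarrow> DERIV (\<lambda>v. - k v) z :> - k' z"
      using der x y by (auto intro!: DERIV_minus)
    then obtain z where "z \<in> {y<..<x}" "- k' z = 0"
      using DERIV_sign_change_imp_zero[of y x "\<lambda>v. - k v" "\<lambda>v. - k' v"] 2 x y by auto
    then show ?thesis
      using that[of z] x y by auto
  qed
  then show False
    using nz by blast
qed

lemma weighted_integral_deviation:
  fixes f h w :: "real \<Rightarrow> real"
  assumes "u \<le> v"
    and der: "\<And>x. x \<in> {u..v} \<Longrightarrow> (h has_real_derivative w x) (at x within {u..v})"
    and w_nonneg: "\<And>x. x \<in> {u..v} \<Longrightarrow> 0 \<le> w x"
    and int: "(\<lambda>x. w x * f x) integrable_on {u..v}"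
    and close: "\<And>x. x \<in> {u..v} \<Longrightarrow> \<bar>f x - c\<bar> \<le> \<eta>"
  shows "\<bar>integral {u..v} (\<lambda>x. w x * f x) - c * (h v - h u)\<bar> \<le> \<eta> * (h v - h u)"
proof -
  have hw: "(w has_integral (h v - h u)) {u..v}"
    using \<open>u \<le> v\<close> der
    by (intro fundamental_theorem_of_calculus)
       (simp_all add: has_real_derivative_iff_has_vector_derivative)
  have cw: "((\<lambda>x. c * w x) has_integral c * (h v - h u)) {u..v}"
    by (rule has_integral_mult_right[OF hw])
  have "(\<lambda>x. w x * f x - c * w x) integrable_on {u..v}"
    using int cw by (intro integrable_diff) auto
  moreover have "(\<lambda>x. \<eta> * w x) integrable_on {u..v}"
    using has_integral_mult_right[OF hw] by blast
  moreover have "norm (w x * f x - c * w x) \<le> \<eta> * w x" if "x \<in> {u..v}" for x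
  proof -
    have "w x * f x - c * w x = w x * (f x - c)"
      by (simp add: algebra_simps)
    then have "norm (w x * f x - c * w x) = w x * \<bar>f x - c\<bar>"
      using w_nonneg[OF that] by (simp add: abs_mult)
    also have "\<dots> \<le> w x * \<eta>"
      using w_nonneg[OF that] close[OF that] by (rule mult_left_mono[rotated])
    finally show ?thesis
      by (simp add: mult.commute)
  qed
  ultimately have "norm (integral {u..v} (\<lambda>x. w x * f x - c * w x)) \<le> integral {u..v} (\<lambda>x. \<eta> * w x)"
    by (rule integral_norm_bound_integral)
  moreover have "integral {u..v} (\<lambda>x. w x * f x - c * w x) = integral {u..v} (\<lambda>x. w x * f x) - c * (h v - h u)"
    using integral_diff[OF int has_integral_integrable[OF cw]] integral_unique[OF cw] by simp
  moreover have "integral {u..v} (\<lambda>x. \<eta> * w x) = \<eta> * (h v - h u)"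
    using has_integral_mult_right[OF hw] by (rule integral_unique)
  ultimately show ?thesis
    by (simp only: real_norm_def)
qed

lemma integral_increment_deviation:
  fixes f h w :: "real \<Rightarrow> real"
  assumes "a \<le> u" and "u \<le> v"
    and der: "\<And>x. x \<in> {u..v} \<Longrightarrow> (h has_real_derivative w x) (at x within {u..v})"
    and w_nonneg: "\<And>x. x \<in> {u..v} \<Longrightarrow> 0 \<le> w x"
    and int: "(\<lambda>x. w x * f x) integrable_on {a..v}"
    and close: "\<And>x. x \<in> {u..v} \<Longrightarrow> \<bar>f x - c\<bar> \<le> \<eta>"
  shows "\<bar>integral {a..v} (\<lambda>x. w x * f x) - integral {a..u} (\<lambda>x. w x * f x) - c * (h v - h u)\<bar>
    \<le> \<eta> * \<bar>h v - h u\<bar>"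
proof -
  have "(w has_integral (h v - h u)) {u..v}"
    using \<open>u \<le> v\<close> der
    by (intro fundamental_theorem_of_calculus)
       (simp_all add: has_real_derivative_iff_has_vector_derivative)
  then have "0 \<le> h v - h u"
    by (rule has_integral_nonneg) (use w_nonneg in blast)
  moreover have "integral {a..v} (\<lambda>x. w x * f x) - integral {a..u} (\<lambda>x. w x * f x)
      = integral {u..v} (\<lambda>x. w x * f x)"
    using Henstock_Kurzweil_Integration.integral_combine[OF \<open>a \<le> u\<close> \<open>u \<le> v\<close> int] by simp
  moreover have "(\<lambda>x. w x * f x) integrable_on {u..v}"
    using integrable_subinterval_real[OF int] \<open>a \<le> u\<close> by auto
  ultimately show ?thesis
    using weighted_integral_deviation[OF \<open>u \<le> v\<close> der w_nonneg _ close] by simp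
qed

lemma DERIV_zero_if_increment_dominated:
  fixes f g h :: "real \<Rightarrow> real"
  assumes t: "t \<in> {c<..<d}" and "DERIV h t :> w" and "isCont f t"
    and dom: "\<And>y \<eta>. y \<in> {c<..<d} \<Longrightarrow> (\<And>x. \<bar>x - t\<bar> \<le> \<bar>y - t\<bar> \<Longrightarrow> \<bar>f x - f t\<bar> \<le> \<eta>) \<Longrightarrow>
      \<bar>g y - g t\<bar> \<le> \<eta> * \<bar>h y - h t\<bar>"
  shows "DERIV g t :> 0"
  unfolding has_field_derivative_iff
proof (rule tendstoI)
  fix e :: real
  assume "e > 0"
  define C where "C = \<bar>w\<bar> + 1"
  define \<eta> where "\<eta> = e / (2 * C)"
  have "C > 0" "\<eta> > 0"
    using \<open>e > 0\<close> by (auto simp: C_def \<eta>_def)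
  obtain \<delta> where "\<delta> > 0" and \<delta>: "\<And>x. x \<noteq> t \<Longrightarrow> \<bar>x - t\<bar> < \<delta> \<Longrightarrow> \<bar>f x - f t\<bar> < \<eta>"
    using LIM_D[OF isContD[OF \<open>isCont f t\<close>] \<open>\<eta> > 0\<close>] by auto
  have "\<forall>\<^sub>F y in at t. dist ((h y - h t) / (y - t)) w < 1"
    using \<open>DERIV h t :> w\<close> by (intro tendstoD) (auto simp: has_field_derivative_iff)
  moreover have "\<forall>\<^sub>F y in at t. y \<in> {c<..<d} \<and> \<bar>y - t\<bar> < \<delta> \<and> y \<noteq> t"
    unfolding eventually_at using t \<open>\<delta> > 0\<close>
    by (intro exI[of _ "min \<delta> (min (t - c) (d - t))"]) (auto simp: dist_real_def)
  ultimately show "\<forall>\<^sub>F y in at t. dist ((g y - g t) / (y - t)) 0 < e"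
  proof eventually_elim
    case (elim y)
    then have y: "y \<in> {c<..<d}" "\<bar>y - t\<bar> < \<delta>" "y \<noteq> t"
      by auto
    have "\<bar>f x - f t\<bar> \<le> \<eta>" if "\<bar>x - t\<bar> \<le> \<bar>y - t\<bar>" for x
      using \<delta>[of x] that y \<open>\<eta> > 0\<close> by (cases "x = t") auto
    then have "\<bar>g y - g t\<bar> \<le> \<eta> * \<bar>h y - h t\<bar>"
      by (rule dom[OF y(1)])
    also have "\<dots> \<le> \<eta> * (C * \<bar>y - t\<bar>)"
    proof -
      have "\<bar>(h y - h t) / (y - t) - w\<bar> < 1"
        using elim by (simp only: dist_real_def)
      then have "\<bar>(h y - h t) / (y - t)\<bar> \<le> C"
        unfolding C_def by arith
      then show ?thesis
        using y \<open>\<eta> > 0\<close> by (simp add: abs_divide divide_le_eq)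
    qed
    also have "\<dots> < e * \<bar>y - t\<bar>"
      using y \<open>e > 0\<close> \<open>C > 0\<close> by (simp add: \<eta>_def)
    finally show ?case
      using y by (simp add: dist_real_def abs_divide divide_less_eq)
  qed
qed

lemma DERIV_integral_mult_nonneg_derivative:
  fixes f h w :: "real \<Rightarrow> real"
  assumes "a \<le> c" and t: "t \<in> {c<..<d}"
    and der: "\<And>x. x \<in> {c<..<d} \<Longrightarrow> DERIV h x :> w x"
    and w_nonneg: "\<And>x. x \<in> {c<..<d} \<Longrightarrow> 0 \<le> w x"
    and int: "\<And>x. x \<in> {c<..<d} \<Longrightarrow> (\<lambda>y. w y * f y) integrable_on {a..x}"
    and "isCont f t"
  shows "DERIV (\<lambda>x. integral {a..x} (\<lambda>y. w y * f y)) t :> w t * f t"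
proof -
  define g where "g x = integral {a..x} (\<lambda>y. w y * f y) - f t * h x" for x
  have increment: "\<bar>g v - g u\<bar> \<le> \<eta> * \<bar>h v - h u\<bar>"
    if uv: "u \<in> {c<..<d}" "v \<in> {c<..<d}" "u \<le> v"
      and close: "\<And>x. x \<in> {u..v} \<Longrightarrow> \<bar>f x - f t\<bar> \<le> \<eta>" for u v \<eta>
  proof -
    have "a \<le> u"
      using \<open>a \<le> c\<close> uv by auto
    have "(h has_real_derivative w x) (at x within {u..v})" "0 \<le> w x" if "x \<in> {u..v}" for x
      using der[of x] w_nonneg[of x] uv that by (auto intro: has_field_derivative_at_within)
    from integral_increment_deviation[OF \<open>a \<le> u\<close> \<open>u \<le> v\<close> this int[OF uv(2)] close]
    show ?thesis
      by (simp add: g_def algebra_simps)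
  qed
  have "DERIV g t :> 0"
  proof (rule DERIV_zero_if_increment_dominated[OF t der[OF t] \<open>isCont f t\<close>])
    fix y \<eta>
    assume "y \<in> {c<..<d}" and close: "\<And>x. \<bar>x - t\<bar> \<le> \<bar>y - t\<bar> \<Longrightarrow> \<bar>f x - f t\<bar> \<le> \<eta>"
    show "\<bar>g y - g t\<bar> \<le> \<eta> * \<bar>h y - h t\<bar>"
    proof (cases "t \<le> y")
      case True
      then show ?thesis
        using increment[of t y \<eta>] t \<open>y \<in> {c<..<d}\<close> close by auto
    next
      case False
      then show ?thesis
        using increment[of y t \<eta>] t \<open>y \<in> {c<..<d}\<close> close by (auto simp: abs_minus_commute)
    qed
  qed
  then have "DERIV (\<lambda>x. g x + f t * h x) t :> 0 + f t * w t"
    using der[OF t] by (intro DERIV_add DERIV_cmult)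
  then show ?thesis
    by (simp add: g_def mult.commute)
qed

lemma DERIV_integral_mult_nonzero_derivative:
  fixes f h w :: "real \<Rightarrow> real"
  assumes "a \<le> c" and t: "t \<in> {c<..<d}"
    and der: "\<And>x. x \<in> {c<..<d} \<Longrightarrow> DERIV h x :> w x"
    and nz: "\<And>x. x \<in> {c<..<d} \<Longrightarrow> w x \<noteq> 0"
    and int: "\<And>x. x \<in> {c<..<d} \<Longrightarrow> (\<lambda>y. w y * f y) integrable_on {a..x}"
    and "isCont f t"
  shows "DERIV (\<lambda>x. integral {a..x} (\<lambda>y. w y * f y)) t :> w t * f t"
  using DERIV_nonzero_imp_constant_sign[OF der nz]
proof
  assume "\<forall>x\<in>{c<..<d}. 0 < w x"
  then show ?thesis
    using DERIV_integral_mult_nonneg_derivative[OF assms(1,2) der _ int \<open>isCont f t\<close>]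
    by (simp add: less_imp_le)
next
  assume "\<forall>x\<in>{c<..<d}. w x < 0"
  moreover have "(\<lambda>y. - w y * f y) integrable_on {a..x}" if "x \<in> {c<..<d}" for x
    using integrable_neg[OF int[OF that]] by simp
  ultimately have "DERIV (\<lambda>x. integral {a..x} (\<lambda>y. - w y * f y)) t :> - w t * f t"
    using der
    by (intro DERIV_integral_mult_nonneg_derivative[OF assms(1,2) _ _ _ \<open>isCont f t\<close>, of "\<lambda>x. - h x"])
       (auto intro: DERIV_minus less_imp_le)
  then have "DERIV (\<lambda>x. - integral {a..x} (\<lambda>y. - w y * f y)) t :> - (- w t * f t)"
    by (rule DERIV_minus)
  then show ?thesis
    by (simp add: integral_neg)
qed

lemma DERIV_powr_div_exponent:
  fixes k :: "real \<Rightarrow> real"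
  assumes "DERIV k x :> k' x" and "0 < k x" and "\<alpha> \<noteq> 0"
  shows "DERIV (\<lambda>y. k y powr \<alpha> / \<alpha>) x :> k' x / k x powr (1 - \<alpha>)"
proof -
  have "DERIV (\<lambda>y. k y powr \<alpha> / \<alpha>) x :> \<alpha> * k x powr (\<alpha> - 1) * k' x / \<alpha>"
    using assms by (auto intro!: derivative_eq_intros)
  moreover have "k x powr (\<alpha> - 1) = 1 / k x powr (1 - \<alpha>)"
    using powr_minus_divide[of "k x" "1 - \<alpha>"] by simp
  ultimately show ?thesis
    using \<open>\<alpha> \<noteq> 0\<close> by simp
qed

lemma has_gen_frac_deriv_if_DERIV:
  assumes "DERIV F t :> D"
  shows "has_gen_frac_deriv k k' \<alpha> F t (D * (k t * (k t powr (- \<alpha>) / k' t)))"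
proof -
  define c where "c = k t powr (- \<alpha>) / k' t"
  define u where "u \<epsilon> = t - k t + k t * exp (\<epsilon> * c)" for \<epsilon>
  have "DERIV u 0 :> k t * c"
    unfolding u_def by (auto intro!: derivative_eq_intros)
  moreover have "u 0 = t"
    by (simp add: u_def)
  ultimately have "DERIV (\<lambda>\<epsilon>. F (u \<epsilon>)) 0 :> D * (k t * c)"
    using DERIV_chain2[of F D] assms by auto
  then show ?thesis
    unfolding has_gen_frac_deriv_def DERIV_def \<open>u 0 = t\<close>[symmetric] by (simp add: u_def c_def)
qed

theorem mainTheorem6:
  fixes a b \<alpha> :: real and k k' f :: "real \<Rightarrow> real"
  assumes "0 \<le> a" and "a < b"
    and "0 < \<alpha>" and "\<alpha> < 1"
    and "continuous_on {a..b} k"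
    and "\<And>x. x \<in> {a..b} \<Longrightarrow> 0 \<le> k x"
    and "\<And>x. x \<in> {a..b} \<Longrightarrow> (k has_real_derivative k' x) (at x within {a..b})"
    and "\<And>x. x \<in> {a<..<b} \<Longrightarrow> k x \<noteq> 0"
    and "\<And>x. x \<in> {a<..<b} \<Longrightarrow> k' x \<noteq> 0"
    and "continuous_on {a..b} f"
    and "gen_frac_integral_exists k k' a b \<alpha> f"
    and "t \<in> {a<..<b}"
  shows "has_gen_frac_deriv k k' \<alpha> (gen_frac_integral k k' a \<alpha> f) t (f t)"
proof -
  define w where "w x = k' x / k x powr (1 - \<alpha>)" for x
  have k_pos: "0 < k x" if "x \<in> {a<..<b}" for x
    using assms(6,8) that by (simp add: less_le)
  have dh: "DERIV (\<lambda>y. k y powr \<alpha> / \<alpha>) x :> w x" if "x \<in> {a<..<b}" for x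
    using assms(7)[of x] that at_within_interior[of x "{a..b}"] k_pos[OF that] assms(3)
    unfolding w_def by (intro DERIV_powr_div_exponent) auto
  have integrand: "gen_frac_integrand k k' \<alpha> f = (\<lambda>y. w y * f y)"
    by (simp add: fun_eq_iff gen_frac_integrand_def w_def)
  have "DERIV (gen_frac_integral k k' a \<alpha> f) t :> w t * f t"
    unfolding gen_frac_integral_def[abs_def] integrand
  proof (rule DERIV_integral_mult_nonzero_derivative[OF order_refl assms(12) dh])
    show "w x \<noteq> 0" if "x \<in> {a<..<b}" for x
      using k_pos[OF that] assms(9)[OF that] by (simp add: w_def)
    show "(\<lambda>y. w y * f y) integrable_on {a..x}" if "x \<in> {a<..<b}" for x
      using assms(11) that unfolding gen_frac_integral_exists_def integrand by auto
    show "isCont f t"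
      using continuous_on_interior[OF assms(10)] assms(12) by auto
  qed
  then have "has_gen_frac_deriv k k' \<alpha> (gen_frac_integral k k' a \<alpha> f) t
      (w t * f t * (k t * (k t powr (- \<alpha>) / k' t)))"
    by (rule has_gen_frac_deriv_if_DERIV)
  moreover have "k t powr (1 - \<alpha>) = k t * k t powr (- \<alpha>)"
    using k_pos[OF assms(12)] by (simp add: powr_diff powr_minus divide_inverse)
  ultimately show ?thesis
    using k_pos[OF assms(12)] assms(9)[OF assms(12)] by (simp add: w_def field_simps)
qed

end
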